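(* Let $m\ge 2$ be an integer and write the prime factorisation of $m!$ as $m!=\prod_{p\le m} p^{\alpha_p}$, where the product runs over all primes $p\le m$ and each $\alpha_p\ge 1$. Then for any primes $p<q\le m$, $$\frac{\alpha_p}{\alpha_q}\ge \left\lfloor \frac{q}{p}\right\rfloor.$$ *)

theory Defs
  imports Complex_Main "HOL-Computational_Algebra.Primes"
begin

end

theory Submission
  imports Defs
begin

text \<open>
  By Legendre's formula, \<open>\<alpha>\<^sub>p = \<Sum>\<^sub>i \<lfloor>m / p\<^sup>i\<rfloor>\<close>. With \<open>k = \<lfloor>q / p\<rfloor>\<close> we have \<open>k p\<^sup>i \<le> (k p)\<^sup>i \<le> q\<^sup>i\<close>,
  so each summand for \<open>q\<close>, multiplied by \<open>k\<close>, is at most the corresponding summand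
  for \<open>p\<close>; summing gives \<open>k \<alpha>\<^sub>q \<le> \<alpha>\<^sub>p\<close>, and \<open>\<alpha>\<^sub>q \<ge> 1\<close> because \<open>q \<le> m\<close>.
\<close>

lemma multiplicity_le_self:
  fixes p n :: nat
  assumes "prime p" and "n > 0"
  shows "multiplicity p n \<le> n"
proof -
  have "multiplicity p n < 2 ^ multiplicity p n" by simp
  also have "\<dots> \<le> p ^ multiplicity p n"
    using prime_ge_2_nat[OF assms(1)] by (simp add: power_mono)
  also have "\<dots> \<le> n"
    using multiplicity_dvd assms(2) by (rule dvd_imp_le)
  finally show ?thesis by simp
qed

lemma card_prime_power_divisors:
  fixes p n N :: nat
  assumes "prime p" and "n > 0"
  shows "card {i \<in> {1..N}. p ^ i dvd n} = min N (multiplicity p n)"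
proof -
  have "p ^ i dvd n \<longleftrightarrow> i \<le> multiplicity p n" for i
    using power_dvd_iff_le_multiplicity assms not_prime_unit by (metis not_gr0)
  then have "{i \<in> {1..N}. p ^ i dvd n} = {1..min N (multiplicity p n)}" by auto
  then show ?thesis by simp
qed

lemma multiplicity_Suc_eq_card:
  fixes p n N :: nat
  assumes "prime p" and "n < N"
  shows "multiplicity p (Suc n) = card {i \<in> {1..N}. p ^ i dvd Suc n}"
  using card_prime_power_divisors[OF assms(1), of "Suc n" N]
    multiplicity_le_self[OF assms(1), of "Suc n"] assms(2) by simp

lemma multiplicity_fact_eq_sum_div_power:
  fixes p m N :: nat
  assumes p: "prime p" and "m \<le> N"
  shows "multiplicity p (fact m) = (\<Sum>i = 1..N. m div p ^ i)"
  using assms(2)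
proof (induction m)
  case 0
  then show ?case by simp
next
  case (Suc m)
  have "p ^ i > 0" for i using prime_gt_0_nat[OF p] by simp
  then have div_Suc_split:
    "Suc m div p ^ i = m div p ^ i + (if p ^ i dvd Suc m then 1 else 0)" for i
    by (auto simp: div_Suc dvd_eq_mod_eq_0)
  have "multiplicity p (fact (Suc m) :: nat) = multiplicity p (Suc m * fact m :: nat)"
    by (simp only: fact_Suc of_nat_id)
  also have "\<dots> = multiplicity p (Suc m) + multiplicity p (fact m :: nat)"
    using p by (intro prime_elem_multiplicity_mult_distrib) auto
  also have "\<dots> = card {i \<in> {1..N}. p ^ i dvd Suc m} + (\<Sum>i = 1..N. m div p ^ i)"
    using Suc multiplicity_Suc_eq_card[OF p] by simp
  also have "\<dots> = (\<Sum>i = 1..N. Suc m div p ^ i)"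
    by (simp add: div_Suc_split sum.distrib sum.If_cases Int_def)
  finally show ?case .
qed

lemma mult_div_power_le_div_power:
  fixes k p q m i :: nat
  assumes "k * p \<le> q" and "p > 0" and "i > 0"
  shows "k * (m div q ^ i) \<le> m div p ^ i"
proof (cases "k = 0")
  case False
  have "k * p ^ i \<le> k ^ i * p ^ i"
    using False assms(3) by (simp add: self_le_power)
  also have "\<dots> \<le> q ^ i"
    using assms(1) by (simp add: power_mono flip: power_mult_distrib)
  finally have "(k * (m div q ^ i)) * p ^ i \<le> (m div q ^ i) * q ^ i"
    by (simp add: ac_simps)
  also have "\<dots> \<le> m" by (simp add: times_div_less_eq_dividend)
  finally show ?thesis
    using assms(2) by (simp add: less_eq_div_iff_mult_less_eq)
qed simp

lemma div_mult_multiplicity_fact_le: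
  fixes p q m :: nat
  assumes "prime p" and "prime q"
  shows "(q div p) * multiplicity q (fact m) \<le> multiplicity p (fact m)"
proof -
  have "(q div p) * multiplicity q (fact m) = (\<Sum>i = 1..m. (q div p) * (m div q ^ i))"
    by (simp add: multiplicity_fact_eq_sum_div_power[OF assms(2), of m m] sum_distrib_left)
  also have "\<dots> \<le> (\<Sum>i = 1..m. m div p ^ i)"
    using prime_gt_0_nat[OF assms(1)]
    by (intro sum_mono mult_div_power_le_div_power) (auto simp: div_times_less_eq_dividend)
  also have "\<dots> = multiplicity p (fact m)"
    by (simp add: multiplicity_fact_eq_sum_div_power[OF assms(1), of m m])
  finally show ?thesis .
qed

theorem lemma5:
  fixes m p q :: nat
  assumes "m \<ge> 2" and "prime p" and "prime q" and "p < q" and "q \<le> m"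
  shows "real (multiplicity p (fact m)) / real (multiplicity q (fact m))
           \<ge> of_int \<lfloor>real q / real p\<rfloor>"
proof -
  have "q dvd fact m"
    using assms(5) prime_gt_0_nat[OF assms(3)] by (simp add: dvd_fact)
  then have "multiplicity q (fact m) > 0"
    using assms(3) by (simp add: prime_multiplicity_gt_zero_iff)
  moreover have "real (q div p) * real (multiplicity q (fact m)) \<le> real (multiplicity p (fact m))"
    using div_mult_multiplicity_fact_le[OF assms(2,3), of m] by (simp flip: of_nat_mult)
  ultimately have "real (q div p) \<le> real (multiplicity p (fact m)) / real (multiplicity q (fact m))"
    by (simp add: pos_le_divide_eq)
  then show ?thesis
    by (simp add: floor_divide_of_nat_eq)
qed

end
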